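(* Let $\mathfrak A=(S_\Omega,S_{\mathcal E},\Omega,\mathcal E,B,u)$ be an accessible GPT fragment such that for every $e\in\mathcal E$ there exists $e^\perp\in\mathcal E$ with $e+e^\perp=u$. If $\mathfrak A$ admits a simplicial-cone embedding $(\Lambda',\tau'_\Omega,\tau'_{\mathcal E})$, then it admits a simplex embedding $(\Lambda,\tau_\Omega,\tau_{\mathcal E})$ with $\Lambda=\{\lambda\in\Lambda':\tau'_{\mathcal E}(u)_\lambda\neq0\}\subseteq\Lambda'$, given by $\tau_{\mathcal E}(w)_\lambda=\tau'_{\mathcal E}(w)_\lambda/\tau'_{\mathcal E}(u)_\lambda$ and $\tau_\Omega(v)_\lambda=\tau'_{\mathcal E}(u)_\lambda\,\tau'_\Omega(v)_\lambda$ for $\lambda\in\Lambda$.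
   Context: An accessible GPT fragment $\mathfrak A=(S_\Omega,S_{\mathcal E},\Omega,\mathcal E,B,u)$ consists of: finite-dimensional real vector spaces $S_\Omega$ and $S_{\mathcal E}$; a set $\Omega\subset S_\Omega$ of states which spans $S_\Omega$; a set $\mathcal E\subset S_{\mathcal E}^*$ of effects which spans $S_{\mathcal E}^*$; a bilinear form $B:S_{\mathcal E}^*\times S_\Omega\to\mathbb R$ (the probability rule); and a unit effect $u\in\mathcal E$. A simplicial-cone embedding of $\mathfrak A$ is a finite set $\Lambda$ together with linear maps $\tau_\Omega:S_\Omega\to\mathbb R^\Lambda$ and $\tau_{\mathcal E}:S_{\mathcal E}^*\to\mathbb R^\Lambda$ such that $\tau_\Omega(s)$ is entrywise nonnegative for all $s\in\Omega$, $\tau_{\mathcal E}(e)$ is entrywise nonnegative for all $e\in\mathcal E$, and $B(w,v)=\tau_{\mathcal E}(w)\cdot\tau_\Omega(v)$ (standard dot product) for all $w\in S_{\mathcal E}^*$, $v\in S_\Omega$. A simplex embedding is a simplicial-cone embedding which additionally satisfies $\tau_{\mathcal E}(u)=(1,1,\dots,1)$. *)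

theory Defs
  imports "HOL-Analysis.Analysis"
begin

text \<open>S_Omega is modelled by a finite-dimensional real vector space type 'v, and the dual
space S_E^* (where effects live) by a finite-dimensional real vector space type 'w.
Vectors in R^Lambda (Lambda a finite set) are functions 'l => real that vanish outside Lambda.\<close>

definition accessible_gpt_fragment ::
  "('v::euclidean_space) set \<Rightarrow> ('w::euclidean_space) set \<Rightarrow> ('w \<Rightarrow> 'v \<Rightarrow> real) \<Rightarrow> 'w \<Rightarrow> bool" where
  "accessible_gpt_fragment \<Omega> \<E> B u \<longleftrightarrow>
     span \<Omega> = UNIV \<and> span \<E> = UNIV \<and> bilinear B \<and> u \<in> \<E>"

definition linear_into_RLambda :: "'l set \<Rightarrow> ('a::real_vector \<Rightarrow> 'l \<Rightarrow> real) \<Rightarrow> bool" where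
  "linear_into_RLambda \<Lambda> \<tau> \<longleftrightarrow>
     (\<forall>l\<in>\<Lambda>. linear (\<lambda>x. \<tau> x l)) \<and> (\<forall>x. \<forall>l. l \<notin> \<Lambda> \<longrightarrow> \<tau> x l = 0)"

definition simplicial_cone_embedding ::
  "('v::euclidean_space) set \<Rightarrow> ('w::euclidean_space) set \<Rightarrow> ('w \<Rightarrow> 'v \<Rightarrow> real) \<Rightarrow>
   'l set \<Rightarrow> ('v \<Rightarrow> 'l \<Rightarrow> real) \<Rightarrow> ('w \<Rightarrow> 'l \<Rightarrow> real) \<Rightarrow> bool" where
  "simplicial_cone_embedding \<Omega> \<E> B \<Lambda> \<tau>\<Omega> \<tau>\<E> \<longleftrightarrow>
     finite \<Lambda> \<and> linear_into_RLambda \<Lambda> \<tau>\<Omega> \<and> linear_into_RLambda \<Lambda> \<tau>\<E> \<and>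
     (\<forall>s\<in>\<Omega>. \<forall>l\<in>\<Lambda>. 0 \<le> \<tau>\<Omega> s l) \<and>
     (\<forall>e\<in>\<E>. \<forall>l\<in>\<Lambda>. 0 \<le> \<tau>\<E> e l) \<and>
     (\<forall>w v. B w v = (\<Sum>l\<in>\<Lambda>. \<tau>\<E> w l * \<tau>\<Omega> v l))"

definition simplex_embedding ::
  "('v::euclidean_space) set \<Rightarrow> ('w::euclidean_space) set \<Rightarrow> ('w \<Rightarrow> 'v \<Rightarrow> real) \<Rightarrow> 'w \<Rightarrow>
   'l set \<Rightarrow> ('v \<Rightarrow> 'l \<Rightarrow> real) \<Rightarrow> ('w \<Rightarrow> 'l \<Rightarrow> real) \<Rightarrow> bool" where
  "simplex_embedding \<Omega> \<E> B u \<Lambda> \<tau>\<Omega> \<tau>\<E> \<longleftrightarrow>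
     simplicial_cone_embedding \<Omega> \<E> B \<Lambda> \<tau>\<Omega> \<tau>\<E> \<and> (\<forall>l\<in>\<Lambda>. \<tau>\<E> u l = 1)"

end

theory Submission
  imports Defs
begin

text \<open>Rescaling the coordinates \<open>\<lambda>\<close> by positive weights \<open>c\<^sub>\<lambda>\<close>, dividing the effect
coordinates and multiplying the state coordinates, preserves the probability rule and
positivity; with \<open>c\<^sub>\<lambda> = \<tau>'\<^sub>\<E>(u)\<^sub>\<lambda>\<close> it normalises the unit effect to all ones. This
weight must be nonzero, and coordinates where it vanishes can be dropped: if \<open>e + e\<^sup>\<perp> = u\<close>
then \<open>\<tau>'\<^sub>\<E>(e)\<^sub>\<lambda>\<close> and \<open>\<tau>'\<^sub>\<E>(e\<^sup>\<perp>)\<^sub>\<lambda>\<close> are nonnegative with sum \<open>\<tau>'\<^sub>\<E>(u)\<^sub>\<lambda> = 0\<close>, so the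
coordinate vanishes on all effects, hence on their span, which is everything.\<close>

lemma linear_into_RLambda_scale:
  assumes "linear_into_RLambda \<Lambda> \<tau>" "\<Lambda>\<^sub>0 \<subseteq> \<Lambda>"
  shows "linear_into_RLambda \<Lambda>\<^sub>0 (\<lambda>x l. if l \<in> \<Lambda>\<^sub>0 then c l * \<tau> x l else 0)"
  unfolding linear_into_RLambda_def
proof (intro conjI ballI allI impI)
  fix l assume l: "l \<in> \<Lambda>\<^sub>0"
  with assms have "linear (\<lambda>x. \<tau> x l)"
    unfolding linear_into_RLambda_def by blast
  from linear_compose_scale_right[OF this, of "c l"] l
  show "linear (\<lambda>x. if l \<in> \<Lambda>\<^sub>0 then c l * \<tau> x l else 0)"
    by simp
qed simp

lemma simplicial_cone_embedding_restrict_rescale: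
  assumes emb: "simplicial_cone_embedding \<Omega> \<E> B \<Lambda> \<tau>\<Omega> \<tau>\<E>"
    and sub: "\<Lambda>\<^sub>0 \<subseteq> \<Lambda>"
    and vanish: "\<And>w l. l \<in> \<Lambda> - \<Lambda>\<^sub>0 \<Longrightarrow> \<tau>\<E> w l = 0"
    and pos: "\<And>l. l \<in> \<Lambda>\<^sub>0 \<Longrightarrow> 0 < c l"
  shows "simplicial_cone_embedding \<Omega> \<E> B \<Lambda>\<^sub>0
           (\<lambda>v l. if l \<in> \<Lambda>\<^sub>0 then c l * \<tau>\<Omega> v l else 0)
           (\<lambda>w l. if l \<in> \<Lambda>\<^sub>0 then \<tau>\<E> w l / c l else 0)"
proof -
  have fin: "finite \<Lambda>" and linO: "linear_into_RLambda \<Lambda> \<tau>\<Omega>"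
    and linE: "linear_into_RLambda \<Lambda> \<tau>\<E>"
    and B: "\<And>w v. B w v = (\<Sum>l\<in>\<Lambda>. \<tau>\<E> w l * \<tau>\<Omega> v l)"
    using emb unfolding simplicial_cone_embedding_def by auto
  have "linear_into_RLambda \<Lambda>\<^sub>0 (\<lambda>w l. if l \<in> \<Lambda>\<^sub>0 then inverse (c l) * \<tau>\<E> w l else 0)"
    using linear_into_RLambda_scale[OF linE sub] .
  then have linE0: "linear_into_RLambda \<Lambda>\<^sub>0 (\<lambda>w l. if l \<in> \<Lambda>\<^sub>0 then \<tau>\<E> w l / c l else 0)"
    by (simp only: divide_inverse_commute)
  have B0: "B w v = (\<Sum>l\<in>\<Lambda>\<^sub>0. (if l \<in> \<Lambda>\<^sub>0 then \<tau>\<E> w l / c l else 0)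
                                * (if l \<in> \<Lambda>\<^sub>0 then c l * \<tau>\<Omega> v l else 0))" for w v
  proof -
    have "B w v = (\<Sum>l\<in>\<Lambda>\<^sub>0. \<tau>\<E> w l * \<tau>\<Omega> v l)"
      unfolding B by (rule sum.mono_neutral_right) (use fin sub vanish in auto)
    also have "\<dots> = (\<Sum>l\<in>\<Lambda>\<^sub>0. (if l \<in> \<Lambda>\<^sub>0 then \<tau>\<E> w l / c l else 0)
                                * (if l \<in> \<Lambda>\<^sub>0 then c l * \<tau>\<Omega> v l else 0))"
      by (rule sum.cong) (use pos in \<open>auto simp: less_imp_neq[symmetric]\<close>)
    finally show ?thesis .
  qed
  have posO: "\<forall>s\<in>\<Omega>. \<forall>l\<in>\<Lambda>. 0 \<le> \<tau>\<Omega> s l"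
    and posE: "\<forall>e\<in>\<E>. \<forall>l\<in>\<Lambda>. 0 \<le> \<tau>\<E> e l"
    using emb unfolding simplicial_cone_embedding_def by auto
  have fin0: "finite \<Lambda>\<^sub>0"
    using fin sub by (rule finite_subset[rotated])
  have posO0: "\<forall>s\<in>\<Omega>. \<forall>l\<in>\<Lambda>\<^sub>0. 0 \<le> (if l \<in> \<Lambda>\<^sub>0 then c l * \<tau>\<Omega> s l else 0)"
    using posO sub pos[THEN less_imp_le] by (auto intro!: mult_nonneg_nonneg)
  have posE0: "\<forall>e\<in>\<E>. \<forall>l\<in>\<Lambda>\<^sub>0. 0 \<le> (if l \<in> \<Lambda>\<^sub>0 then \<tau>\<E> e l / c l else 0)"
    using posE sub pos[THEN less_imp_le] by (auto intro!: divide_nonneg_nonneg)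
  show ?thesis
    unfolding simplicial_cone_embedding_def
    by (intro conjI allI fin0 linE0 posO0 posE0 B0 linear_into_RLambda_scale[OF linO sub])
qed

lemma simplicial_cone_embedding_unit_coordinate_zero:
  assumes frag: "accessible_gpt_fragment \<Omega> \<E> B u"
    and compl: "\<forall>e\<in>\<E>. \<exists>e'\<in>\<E>. e + e' = u"
    and emb: "simplicial_cone_embedding \<Omega> \<E> B \<Lambda> \<tau>\<Omega> \<tau>\<E>"
    and l: "l \<in> \<Lambda>" "\<tau>\<E> u l = 0"
  shows "\<tau>\<E> w l = 0"
proof -
  have lin: "linear (\<lambda>x. \<tau>\<E> x l)" and posE: "\<forall>e\<in>\<E>. 0 \<le> \<tau>\<E> e l"
    using emb l unfolding simplicial_cone_embedding_def linear_into_RLambda_def by auto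
  have "\<tau>\<E> e l = 0" if e: "e \<in> \<E>" for e
  proof -
    obtain e' where e': "e' \<in> \<E>" "e + e' = u" using compl e by blast
    have "\<tau>\<E> e l + \<tau>\<E> e' l = 0"
      using linear_add[OF lin, of e e'] e'(2) l(2) by simp
    with posE e e'(1) show ?thesis by (meson add_nonneg_eq_0_iff)
  qed
  moreover have "w \<in> span \<E>"
    using frag unfolding accessible_gpt_fragment_def by simp
  ultimately show ?thesis
    using linear_eq_0_on_span[OF lin] by blast
qed

theorem mainTheorem4:
  fixes \<Omega> :: "('v::euclidean_space) set" and \<E> :: "('w::euclidean_space) set"
    and B :: "'w \<Rightarrow> 'v \<Rightarrow> real" and u :: 'w
    and \<Lambda>' :: "'l set" and \<tau>\<Omega>' :: "'v \<Rightarrow> 'l \<Rightarrow> real" and \<tau>\<E>' :: "'w \<Rightarrow> 'l \<Rightarrow> real"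
  assumes frag: "accessible_gpt_fragment \<Omega> \<E> B u"
    and compl: "\<forall>e\<in>\<E>. \<exists>e'\<in>\<E>. e + e' = u"
    and emb: "simplicial_cone_embedding \<Omega> \<E> B \<Lambda>' \<tau>\<Omega>' \<tau>\<E>'"
  shows "simplex_embedding \<Omega> \<E> B u {l\<in>\<Lambda>'. \<tau>\<E>' u l \<noteq> 0}
           (\<lambda>v l. if l \<in> \<Lambda>' \<and> \<tau>\<E>' u l \<noteq> 0 then \<tau>\<E>' u l * \<tau>\<Omega>' v l else 0)
           (\<lambda>w l. if l \<in> \<Lambda>' \<and> \<tau>\<E>' u l \<noteq> 0 then \<tau>\<E>' w l / \<tau>\<E>' u l else 0)"
proof -
  let ?\<Lambda> = "{l\<in>\<Lambda>'. \<tau>\<E>' u l \<noteq> 0}"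
  have "0 \<le> \<tau>\<E>' u l" if "l \<in> \<Lambda>'" for l
    using frag emb that unfolding accessible_gpt_fragment_def simplicial_cone_embedding_def
    by auto
  then have unit_pos: "0 < \<tau>\<E>' u l" if "l \<in> ?\<Lambda>" for l
    using that by fastforce
  have "simplicial_cone_embedding \<Omega> \<E> B ?\<Lambda>
          (\<lambda>v l. if l \<in> ?\<Lambda> then \<tau>\<E>' u l * \<tau>\<Omega>' v l else 0)
          (\<lambda>w l. if l \<in> ?\<Lambda> then \<tau>\<E>' w l / \<tau>\<E>' u l else 0)"
    using simplicial_cone_embedding_unit_coordinate_zero[OF frag compl emb]
    by (intro simplicial_cone_embedding_restrict_rescale[OF emb] unit_pos) auto
  then show ?thesis
    unfolding simplex_embedding_def by simp
qed

end
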